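(* Let $(X,\rho)$ be a metric space, $A,B$ nonempty subsets of $X$, and $T:A\cup B\to A\cup B$ a cyclic map for which there is $\lambda\in[0,1)$ such that $$\rho(Tx,Ty)\le\lambda\max\{\rho(x,y),\rho(x,Tx),\rho(y,Ty)\}+(1-\lambda)\,\mathrm{dist}(A,B)$$ for all $x\in A$, $y\in B$. Then for every $x\in A\cup B$ the sequence of iterates $\{T^nx\}_{n=1}^\infty$ is bounded.
   Context: $\mathrm{dist}(A,B)=\inf\{\rho(a,b):a\in A,\ b\in B\}$. A map $T:A\cup B\to A\cup B$ is cyclic if $T(A)\subseteq B$ and $T(B)\subseteq A$. *)

theory Defs
  imports "HOL-Analysis.Analysis"
begin

definition dist_sets :: "'a::metric_space set \<Rightarrow> 'a set \<Rightarrow> real" where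
  "dist_sets A B = Inf {dist a b | a b. a \<in> A \<and> b \<in> B}"

definition cyclic_map :: "'a set \<Rightarrow> 'a set \<Rightarrow> ('a \<Rightarrow> 'a) \<Rightarrow> bool" where
  "cyclic_map A B T \<longleftrightarrow> T ` A \<subseteq> B \<and> T ` B \<subseteq> A"

end

theory Submission
  imports Defs
begin

text \<open>Along an orbit the iterates alternate between \<open>A\<close> and \<open>B\<close>, so the contraction applies to
  any two iterates whose indices differ by an odd number. Applied to consecutive iterates it shows
  that the step lengths \<open>d\<^sub>n = \<rho>(T\<^sup>nx, T\<^sup>n\<^sup>+\<^sup>1x)\<close> never exceed \<open>M = max d\<^sub>0 dist(A,B)\<close>. For an odd
  gap, \<open>\<rho>(T\<^sup>mx, T\<^sup>nx) \<le> d\<^sub>m + \<rho>(T\<^sup>m\<^sup>+\<^sup>1x, T\<^sup>n\<^sup>+\<^sup>1x) + d\<^sub>n\<close>, so the contraction bounds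
  \<open>r = \<rho>(T\<^sup>m\<^sup>+\<^sup>1x, T\<^sup>n\<^sup>+\<^sup>1x)\<close> by \<open>\<lambda>(r + 2M) + (1 - \<lambda>) dist(A,B)\<close>, i.e. uniformly. Every iterate
  is then within one such odd-gap distance plus one step of \<open>Tx\<close>.\<close>

locale odd_gap_contraction =
  fixes s :: "nat \<Rightarrow> 'a::metric_space" and lam D :: real
  assumes lam_nonneg: "0 \<le> lam" and lam_less_1: "lam < 1"
    and contract: "\<And>m n. odd (m + n) \<Longrightarrow>
      dist (s (Suc m)) (s (Suc n))
        \<le> lam * Max {dist (s m) (s n), dist (s m) (s (Suc m)), dist (s n) (s (Suc n))}
          + (1 - lam) * D"
begin

definition step_bound :: real where
  "step_bound = max (dist (s 0) (s 1)) D"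

lemma step_dist_le_max: "dist (s (Suc n)) (s (Suc (Suc n))) \<le> max (dist (s n) (s (Suc n))) D"
proof (rule ccontr)
  let ?d = "dist (s n) (s (Suc n))" and ?d' = "dist (s (Suc n)) (s (Suc (Suc n)))"
  assume "\<not> ?d' \<le> max ?d D"
  then have larger: "?d < ?d'" "D < ?d'" by auto
  have "?d' \<le> lam * ?d' + (1 - lam) * D"
    using contract[of n "Suc n"] larger(1) by (simp add: dist_commute)
  moreover have "(1 - lam) * D < (1 - lam) * ?d'"
    using larger(2) lam_less_1 by simp
  ultimately show False by (simp add: algebra_simps)
qed

lemma step_dist_le_step_bound: "dist (s n) (s (Suc n)) \<le> step_bound"
proof (induction n)
  case 0
  then show ?case by (simp add: step_bound_def)
next
  case (Suc n)
  then show ?case using step_dist_le_max[of n] by (simp add: step_bound_def)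
qed

lemma step_bound_nonneg: "0 \<le> step_bound"
  by (simp add: step_bound_def max.coboundedI1)

definition odd_gap_bound :: real where
  "odd_gap_bound = (2 * lam * step_bound + (1 - lam) * D) / (1 - lam)"

lemma odd_gap_dist_le:
  assumes "odd (m + n)"
  shows "dist (s (Suc m)) (s (Suc n)) \<le> odd_gap_bound"
proof -
  let ?r = "dist (s (Suc m)) (s (Suc n))"
  have "dist (s m) (s n) \<le> dist (s m) (s (Suc m)) + ?r + dist (s n) (s (Suc n))"
    using dist_triangle[of "s m" "s n" "s (Suc m)"] dist_triangle[of "s (Suc m)" "s n" "s (Suc n)"]
    by (simp add: dist_commute)
  then have "Max {dist (s m) (s n), dist (s m) (s (Suc m)), dist (s n) (s (Suc n))}
      \<le> ?r + 2 * step_bound"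
    using step_dist_le_step_bound[of m] step_dist_le_step_bound[of n] step_bound_nonneg
    by (simp; smt (verit) zero_le_dist)
  then have "?r \<le> lam * (?r + 2 * step_bound) + (1 - lam) * D"
    using contract[OF assms] lam_nonneg by (meson add_right_mono mult_left_mono order.trans)
  then have "?r * (1 - lam) \<le> 2 * lam * step_bound + (1 - lam) * D"
    by (simp add: algebra_simps)
  then show ?thesis
    using lam_less_1 by (simp add: odd_gap_bound_def pos_le_divide_eq)
qed

lemma bounded_range: "bounded (range s)"
proof -
  have odd_gap_bound_nonneg: "0 \<le> odd_gap_bound"
    using odd_gap_dist_le[of 0 1] by (simp add: order_trans[OF zero_le_dist])
  have "dist (s 1) (s n) \<le> step_bound + odd_gap_bound" for n
  proof (cases "even n")
    case True
    show ?thesis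
    proof (cases n)
      case 0
      then show ?thesis
        using step_dist_le_step_bound[of 0] odd_gap_bound_nonneg by (simp add: dist_commute)
    next
      case (Suc k)
      then show ?thesis
        using True odd_gap_dist_le[of 0 k] step_bound_nonneg by simp
    qed
  next
    case False
    then obtain k where k: "n = Suc k" by (cases n) auto
    have "dist (s 2) (s n) \<le> odd_gap_bound"
      using False odd_gap_dist_le[of 1 k] by (simp add: k numeral_2_eq_2)
    moreover have "dist (s 1) (s 2) \<le> step_bound"
      using step_dist_le_step_bound[of 1] by (simp add: numeral_2_eq_2)
    ultimately show ?thesis
      using dist_triangle[of "s 1" "s n" "s 2"] by linarith
  qed
  then show ?thesis
    unfolding bounded_def by blast
qed

end

lemma cyclic_map_funpow_mem:
  assumes "cyclic_map A B T" "x \<in> A"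
  shows "(T ^^ n) x \<in> (if even n then A else B)"
  using assms by (induction n) (auto simp: cyclic_map_def)

lemma cyclic_map_swap: "cyclic_map A B T \<longleftrightarrow> cyclic_map B A T"
  by (auto simp: cyclic_map_def)

lemma cyclic_orbit_odd_gap_opposite:
  assumes "cyclic_map A B T" "x \<in> A \<union> B" "odd (m + n)"
  shows "(T ^^ m) x \<in> A \<and> (T ^^ n) x \<in> B \<or> (T ^^ m) x \<in> B \<and> (T ^^ n) x \<in> A"
proof -
  have "cyclic_map C D T \<Longrightarrow> x \<in> C \<Longrightarrow>
      (T ^^ m) x \<in> C \<and> (T ^^ n) x \<in> D \<or> (T ^^ m) x \<in> D \<and> (T ^^ n) x \<in> C" for C D
    using assms(3) cyclic_map_funpow_mem[of C D T x m] cyclic_map_funpow_mem[of C D T x n]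
    by (cases "even m") auto
  then show ?thesis
    using assms(1,2) cyclic_map_swap by blast
qed

lemma cyclic_contraction_symmetric:
  assumes "\<And>x y. x \<in> A \<Longrightarrow> y \<in> B \<Longrightarrow>
          dist (T x) (T y) \<le> lam * Max {dist x y, dist x (T x), dist y (T y)} + c"
    and "x \<in> A \<and> y \<in> B \<or> x \<in> B \<and> y \<in> A"
  shows "dist (T x) (T y) \<le> lam * Max {dist x y, dist x (T x), dist y (T y)} + c"
  using assms(2)
proof
  assume "x \<in> B \<and> y \<in> A"
  then show ?thesis
    using assms(1)[of y x] by (simp add: dist_commute insert_commute)
qed (use assms(1) in blast)

theorem lemma32:
  fixes A B :: "'a::metric_space set" and T :: "'a \<Rightarrow> 'a" and lam :: real
  assumes "A \<noteq> {}" and "B \<noteq> {}"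
    and "cyclic_map A B T"
    and "0 \<le> lam" and "lam < 1"
    and "\<And>x y. x \<in> A \<Longrightarrow> y \<in> B \<Longrightarrow>
          dist (T x) (T y) \<le> lam * Max {dist x y, dist x (T x), dist y (T y)}
            + (1 - lam) * dist_sets A B"
    and "x \<in> A \<union> B"
  shows "bounded {(T ^^ n) x | n. n \<ge> 1}"
proof -
  interpret odd_gap_contraction "\<lambda>n. (T ^^ n) x" lam "dist_sets A B"
  proof
    fix m n :: nat
    assume "odd (m + n)"
    then show "dist ((T ^^ Suc m) x) ((T ^^ Suc n) x)
        \<le> lam * Max {dist ((T ^^ m) x) ((T ^^ n) x), dist ((T ^^ m) x) ((T ^^ Suc m) x),
                     dist ((T ^^ n) x) ((T ^^ Suc n) x)} + (1 - lam) * dist_sets A B"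
      using cyclic_contraction_symmetric[OF assms(6) cyclic_orbit_odd_gap_opposite[OF assms(3,7)]] by simp
  qed (use assms(4,5) in auto)
  show ?thesis
    by (rule bounded_subset[OF bounded_range]) auto
qed

end
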